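(* Let $c$ be a prime of the form $2^r\cdot 3+1$ ($r\ge1$), and let $a,b>1$ be integers with $a,b,c$ pairwise coprime and $e_c(b)=3$. Suppose positive integers $z,Y,Z$ with $z\le Z$ and $Y\equiv 4\pmod 6$ satisfy $a+b=c^z$ and $a+b^Y=c^Z$, and let $e=\nu_c((Y-1)/3)$. Then \[ c^z(2b+1)+(Y-1)(b^2+b+1)\equiv 0\pmod{c^{2(z-e)}}. \]
   Context: For a positive integer $M$ and an integer $A$ coprime to $M$, $e_M(A)$ denotes the least positive integer $e$ such that $A^e\equiv \pm1\pmod M$. $\nu_c$ is the $c$-adic valuation. *)

theory Defs
  imports "HOL-Number_Theory.Number_Theory"
begin

definition pm_ord :: "int \<Rightarrow> int \<Rightarrow> nat" where
  "pm_ord M A = (LEAST e. 0 < e \<and> ([A ^ e = 1] (mod M) \<or> [A ^ e = -1] (mod M)))"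

end

theory Submission
  imports Defs
begin

(* Write Y = 3k + 1 with k odd, so that e = v_c(k), and put x = b^3.  The two equations give
   c^Z = c^z + b (x^k - 1), so c^z divides x^k - 1; since e_c(b) = 3 and k is odd, c divides
   x - 1 but not b - 1.  Lifting the exponent, c^(z-e) divides x - 1 = (b - 1)(b^2 + b + 1),
   hence divides N = b^2 + b + 1, and then c^(2(z-e)) <= N^2 < c^(Z+1).  The second-order form
   of lifting the exponent, namely that c^(2s + v_c(n)) divides x^n - 1 - n (x - 1) whenever
   c^s divides x - 1, shows that modulo c^(2(z-e)) we have c^z = -b k (x - 1), and the claim
   follows from the identity c^z (2b + 1) + 3kN = (2b + 1)(c^z + b k (x - 1)) - k (2b - 3) N^2. *)

definition power_defect :: "'a::comm_ring_1 \<Rightarrow> nat \<Rightarrow> 'a" where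
  "power_defect x n = x ^ n - 1 - of_nat n * (x - 1)"

lemma power_defect_eq_sum: "power_defect x n = (x - 1) * (\<Sum>i<n. x ^ i - 1)"
  by (simp add: power_defect_def sum_subtractf right_diff_distrib power_diff_1_eq[symmetric]
      mult.commute)

lemma power_defect_mult:
  "power_defect x (m * n) = power_defect (x ^ n) m + of_nat m * power_defect x n"
proof -
  have "x ^ (m * n) = (x ^ n) ^ m"
    by (metis mult.commute power_mult)
  then show ?thesis
    by (simp add: power_defect_def algebra_simps)
qed

lemma square_dvd_power_defect:
  assumes "q dvd x - 1"
  shows "q ^ 2 dvd power_defect x n"
proof -
  have "q dvd (\<Sum>i<n. x ^ i - 1)"
    using assms by (intro dvd_sum) (simp add: power_diff_1_eq dvd_mult2)
  with assms show ?thesis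
    by (simp add: power_defect_eq_sum power2_eq_square mult_dvd_mono)
qed

lemma cube_dvd_power_defect_second_order:
  "(x - 1) ^ 3 dvd 2 * power_defect x n - of_nat n * (of_nat n - 1) * (x - 1) ^ 2"
proof (induction n)
  case (Suc n)
  have "2 * power_defect x (Suc n) - of_nat (Suc n) * (of_nat (Suc n) - 1) * (x - 1) ^ 2
      = (2 * power_defect x n - of_nat n * (of_nat n - 1) * (x - 1) ^ 2)
        + 2 * (x - 1) * power_defect x n"
    by (simp add: power_defect_def algebra_simps power2_eq_square)
  moreover have "(x - 1) * (x - 1) ^ 2 dvd (2 * (x - 1)) * power_defect x n"
    by (intro mult_dvd_mono square_dvd_power_defect dvd_triv_right) simp
  then have "(x - 1) ^ 3 dvd 2 * (x - 1) * power_defect x n"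
    by (simp add: power_numeral_reduce)
  ultimately show ?case using Suc.IH by simp
qed (simp add: power_defect_def)

lemma prime_power_dvd_power_defect_prime:
  fixes p x :: int
  assumes "prime p" "odd p" "s \<ge> 1" "p ^ s dvd x - 1"
  shows "p ^ (2 * s + 1) dvd power_defect x (nat p)"
proof -
  have p_nat: "of_nat (nat p) = p"
    using prime_gt_0_int[OF \<open>prime p\<close>] by simp
  have "p ^ (3 * s) dvd (x - 1) ^ 3"
    using \<open>p ^ s dvd x - 1\<close> by (simp add: power_mult dvd_power_same mult.commute)
  then have cube: "p ^ (2 * s + 1) dvd (x - 1) ^ 3"
    using \<open>s \<ge> 1\<close> by (elim power_le_dvd) simp
  have "p ^ (2 * s) dvd (x - 1) ^ 2"
    using dvd_power_same[OF \<open>p ^ s dvd x - 1\<close>, of 2] by (simp add: power_mult mult.commute)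
  then have "p * p ^ (2 * s) dvd (p * (p - 1)) * (x - 1) ^ 2"
    by (intro mult_dvd_mono) simp_all
  then have square: "p ^ (2 * s + 1) dvd p * (p - 1) * (x - 1) ^ 2"
    by simp
  have "p ^ (2 * s + 1) dvd 2 * power_defect x (nat p) - p * (p - 1) * (x - 1) ^ 2"
    using cube_dvd_power_defect_second_order[of x "nat p"] cube dvd_trans p_nat by simp
  with square have "p ^ (2 * s + 1) dvd 2 * power_defect x (nat p)"
    by (metis diff_add_cancel dvd_add)
  moreover have "coprime (p ^ (2 * s + 1)) 2"
    using \<open>odd p\<close> by simp
  ultimately show ?thesis
    using coprime_dvd_mult_right_iff by blast
qed

lemma prime_power_dvd_power_defect_prime_power:
  fixes p x :: int
  assumes "prime p" "odd p" "s \<ge> 1" "p ^ s dvd x - 1"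
  shows "p ^ (2 * s + e) dvd power_defect x (nat p ^ e * k)"
  using assms(3,4)
proof (induction e arbitrary: x s)
  case 0
  then show ?case
    using square_dvd_power_defect[of "p ^ s" x k] by (simp add: power_mult mult.commute)
next
  case (Suc e)
  have "p \<ge> 0"
    using prime_ge_0_int[OF \<open>prime p\<close>] .
  have defect_p: "p ^ (2 * s + 1) dvd power_defect x (nat p)"
    using prime_power_dvd_power_defect_prime[OF assms(1,2) Suc.prems] .
  have "x ^ nat p - 1 = power_defect x (nat p) + p * (x - 1)"
    by (simp add: power_defect_def \<open>p \<ge> 0\<close>)
  moreover have "p ^ (s + 1) dvd power_defect x (nat p)"
    by (rule power_le_dvd[OF defect_p]) simp
  moreover have "p ^ (s + 1) dvd p * (x - 1)"
    using Suc.prems by simp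
  ultimately have "p ^ (s + 1) dvd x ^ nat p - 1"
    by simp
  then have "p ^ (2 * (s + 1) + e) dvd power_defect (x ^ nat p) (nat p ^ e * k)"
    using Suc.IH[of "s + 1"] by simp
  then have IH: "p ^ (2 * s + Suc e) dvd power_defect (x ^ nat p) (nat p ^ e * k)"
    by (rule power_le_dvd) simp
  have "p ^ e * p ^ (2 * s + 1) dvd (p ^ e * int k) * power_defect x (nat p)"
    using defect_p by (intro mult_dvd_mono) simp_all
  then have "p ^ (2 * s + Suc e) dvd of_nat (nat p ^ e * k) * power_defect x (nat p)"
    by (simp add: \<open>p \<ge> 0\<close> power_add mult.commute)
  moreover have "nat p ^ Suc e * k = nat p ^ e * k * nat p"
    by (simp add: mult_ac)
  ultimately show ?case
    using IH by (simp only: power_defect_mult dvd_add)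
qed

lemma prime_power_dvd_power_defect:
  fixes p x :: int
  assumes "prime p" "odd p" "s \<ge> 1" "p ^ s dvd x - 1"
  shows "p ^ (2 * s + multiplicity p (int n)) dvd power_defect x n"
proof -
  define e where "e = multiplicity p (int n)"
  obtain k where k: "int n = p ^ e * k"
    using multiplicity_dvd[of p "int n"] unfolding e_def by blast
  have "k \<ge> 0"
    using k prime_gt_0_int[OF \<open>prime p\<close>]
    by (metis of_nat_0_le_iff zero_le_mult_iff zero_less_power not_le)
  have "n = nat (p ^ e * k)"
    using k by simp
  also have "\<dots> = nat p ^ e * nat k"
    using \<open>k \<ge> 0\<close> prime_ge_0_int[OF \<open>prime p\<close>] by (simp add: nat_mult_distrib nat_power_eq)
  finally show ?thesis
    using prime_power_dvd_power_defect_prime_power[OF assms(1-4)] unfolding e_def by metis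
qed

lemma multiplicity_power_sub_one:
  fixes p x :: int
  assumes "prime p" "odd p" "p dvd x - 1" "x \<noteq> 1" "n > 0"
  shows "multiplicity p (x ^ n - 1) = multiplicity p (x - 1) + multiplicity p (int n)"
proof -
  define s where "s = multiplicity p (x - 1)"
  define e where "e = multiplicity p (int n)"
  have "x - 1 \<noteq> 0" "int n \<noteq> 0"
    using assms(4,5) by simp_all
  then have "int n * (x - 1) \<noteq> 0"
    by simp
  have "\<not> is_unit p"
    using assms(1) not_prime_unit by blast
  have "s \<ge> 1"
    using multiplicity_gt_zero_iff[OF \<open>x - 1 \<noteq> 0\<close> \<open>\<not> is_unit p\<close>] assms(3)
    unfolding s_def by simp
  have "multiplicity p (int n * (x - 1)) = s + e"
    using prime_elem_multiplicity_mult_distrib[OF prime_imp_prime_elem[OF assms(1)]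
        \<open>int n \<noteq> 0\<close> \<open>x - 1 \<noteq> 0\<close>]
    unfolding s_def e_def by simp
  then have linear: "p ^ (s + e) dvd int n * (x - 1)" "\<not> p ^ Suc (s + e) dvd int n * (x - 1)"
    using power_dvd_iff_le_multiplicity[OF \<open>int n * (x - 1) \<noteq> 0\<close> \<open>\<not> is_unit p\<close>]
    by (simp_all del: power_Suc)
  have "p ^ (2 * s + e) dvd power_defect x n"
    using prime_power_dvd_power_defect[OF assms(1,2) \<open>s \<ge> 1\<close>
        multiplicity_dvd[of p "x - 1", folded s_def]]
    unfolding e_def .
  then have defect: "p ^ Suc (s + e) dvd power_defect x n"
    by (rule power_le_dvd) (use \<open>s \<ge> 1\<close> in simp)
  have split: "x ^ n - 1 = int n * (x - 1) + power_defect x n"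
    by (simp add: power_defect_def)
  have "p ^ (s + e) dvd x ^ n - 1"
    unfolding split using linear(1) power_le_dvd[OF defect] by (intro dvd_add) simp_all
  moreover have "\<not> p ^ Suc (s + e) dvd x ^ n - 1"
    unfolding split using linear(2) defect by (metis add_diff_cancel_right' dvd_diff)
  ultimately show ?thesis
    unfolding s_def e_def by (rule multiplicity_eqI)
qed

lemma prime_power_dvd_sub_one_of_dvd_power_sub_one:
  fixes p x :: int
  assumes "prime p" "odd p" "p dvd x - 1" "x \<noteq> 1" "n > 0" "p ^ z dvd x ^ n - 1"
  shows "p ^ (z - multiplicity p (int n)) dvd x - 1"
proof -
  have lte: "multiplicity p (x ^ n - 1) = multiplicity p (x - 1) + multiplicity p (int n)"
    using assms(1-5) by (rule multiplicity_power_sub_one)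
  moreover have "multiplicity p (x - 1) > 0"
    using assms(3,4) prime_multiplicity_gt_zero_iff[OF prime_imp_prime_elem[OF assms(1)]] by simp
  ultimately have "x ^ n - 1 \<noteq> 0"
    by auto
  then have "z \<le> multiplicity p (x ^ n - 1)"
    using assms(1,6) not_prime_unit by (blast intro: multiplicity_geI)
  then show ?thesis
    unfolding lte by (intro multiplicity_dvd') simp
qed

lemma power_pm_ord_cong_one_or_minus_one:
  fixes p A :: int
  assumes "prime p" "\<not> p dvd A"
  shows "[A ^ pm_ord p A = 1] (mod p) \<or> [A ^ pm_ord p A = - 1] (mod p)"
proof -
  \<comment> \<open>Fermat's little theorem provides a witness; LEAST of an unsatisfiable predicate is unspecified.\<close>
  have "nat p > 1"
    using prime_gt_1_int[OF assms(1)] by simp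
  have "\<not> nat p dvd nat (A mod p)"
  proof
    assume "nat p dvd nat (A mod p)"
    then have "int (nat p) dvd int (nat (A mod p))"
      by (simp only: int_dvd_int_iff)
    then have "p dvd A mod p"
      using prime_gt_0_int[OF assms(1)] by simp
    with assms(2) show False
      by (simp add: dvd_mod_iff)
  qed
  then have "[nat (A mod p) ^ (nat p - 1) = 1] (mod nat p)"
    using assms(1) by (intro fermat_theorem) (simp add: prime_nat_iff_prime)
  then have "[int (nat (A mod p)) ^ (nat p - 1) = 1] (mod int (nat p))"
    by (simp flip: cong_int_iff)
  then have "[(A mod p) ^ (nat p - 1) = 1] (mod p)"
    using prime_gt_0_int[OF assms(1)] by simp
  then have "[A ^ (nat p - 1) = 1] (mod p)"
    by (simp add: cong_def power_mod)
  with \<open>nat p > 1\<close> have "\<exists>e. 0 < e \<and> ([A ^ e = 1] (mod p) \<or> [A ^ e = - 1] (mod p))"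
    by (intro exI[of _ "nat p - 1"]) simp
  from LeastI_ex[OF this] show ?thesis
    unfolding pm_ord_def by blast
qed

lemma not_cong_one_below_pm_ord:
  assumes "0 < e" "e < pm_ord M A"
  shows "\<not> [A ^ e = 1] (mod M)"
  using not_less_Least[OF assms(2)[unfolded pm_ord_def]] assms(1) by blast

lemma dvd_sub_one_of_dvd_odd_power_sub_one:
  fixes p x :: int
  assumes "[x = 1] (mod p) \<or> [x = - 1] (mod p)" "p dvd x ^ k - 1" "odd k" "\<not> p dvd 2"
  shows "p dvd x - 1"
proof -
  have "\<not> [x = - 1] (mod p)"
  proof
    assume "[x = - 1] (mod p)"
    then have "[x ^ k = - 1] (mod p)"
      using cong_pow[of x "- 1" p k] \<open>odd k\<close> by simp
    moreover have "[x ^ k = 1] (mod p)"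
      using assms(2) by (simp add: cong_iff_dvd_diff)
    ultimately have "[1 = - 1] (mod p)"
      by (metis cong_sym cong_trans)
    with assms(4) show False
      by (simp add: cong_iff_dvd_diff)
  qed
  with assms(1) show ?thesis
    by (simp add: cong_iff_dvd_diff)
qed

lemma double_exponent_le_of_power_dvd:
  fixes b c :: int
  assumes "c > 4" "b > 1" "Y \<ge> 4" "b ^ Y < c ^ Z" "c ^ m dvd b\<^sup>2 + b + 1"
  shows "2 * m \<le> Z"
proof -
  have "c ^ m \<le> b\<^sup>2 + b + 1"
    using assms(2,5) by (intro zdvd_imp_le) (simp_all add: add_pos_pos)
  also have "\<dots> \<le> 2 * b\<^sup>2"
    using mult_right_mono[of 2 b b] assms(2) unfolding power2_eq_square by linarith
  finally have "c ^ m \<le> 2 * b\<^sup>2" .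
  have "c ^ (2 * m) = (c ^ m)\<^sup>2"
    by (simp add: power_mult mult.commute)
  also have "\<dots> \<le> (2 * b\<^sup>2)\<^sup>2"
    using \<open>c ^ m \<le> 2 * b\<^sup>2\<close> assms(1) by (intro power_mono) simp_all
  also have "\<dots> = 4 * b ^ 4"
    by (simp add: power_mult_distrib flip: power_mult)
  also have "\<dots> < c * b ^ 4"
    using assms(1,2) by (intro mult_strict_right_mono) simp_all
  also have "\<dots> \<le> c * b ^ Y"
    using assms(1-3) by (intro mult_left_mono power_increasing) simp_all
  also have "\<dots> < c * c ^ Z"
    using assms(1,4) by (intro mult_strict_left_mono) simp_all
  also have "\<dots> = c ^ (Z + 1)"
    by simp
  finally have "2 * m < Z + 1"
    using assms(1) power_strict_increasing_iff[of c "2 * m" "Z + 1"] by simp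
  then show ?thesis
    by simp
qed

lemma power_dvd_trinomial_of_pm_ord_three:
  fixes p b :: int
  assumes "prime p" "pm_ord p b = 3" "p ^ m dvd b ^ 3 - 1"
  shows "p ^ m dvd b\<^sup>2 + b + 1"
proof -
  have "\<not> p dvd b - 1"
    using not_cong_one_below_pm_ord[of 1 p b] assms(2) by (simp add: cong_iff_dvd_diff)
  then have "coprime (p ^ m) (b - 1)"
    using assms(1) by (simp add: prime_imp_coprime)
  moreover have "b ^ 3 - 1 = (b - 1) * (b\<^sup>2 + b + 1)"
    by (simp add: algebra_simps power2_eq_square power3_eq_cube)
  ultimately show ?thesis
    using assms(3) coprime_dvd_mult_right_iff by metis
qed

lemma power_dvd_combination_of_pm_ord_three:
  fixes b c :: int and k z Z :: nat
  assumes "prime c" "c > 4" "b > 1" "k > 0" "pm_ord c b = 3" "c dvd b ^ 3 - 1"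
    and "c ^ z dvd (b ^ 3) ^ k - 1" "c ^ Z = c ^ z + b * ((b ^ 3) ^ k - 1)"
    and "b ^ (3 * k + 1) < c ^ Z"
  shows "c ^ (2 * (z - multiplicity c (int k)))
           dvd c ^ z * (2 * b + 1) + 3 * int k * (b\<^sup>2 + b + 1)"
proof (cases "multiplicity c (int k) < z")
  case True
  define m where "m = z - multiplicity c (int k)"
  have "odd c"
    using assms(1,2) by (simp add: prime_odd_int)
  have "b ^ 3 \<noteq> 1"
    using assms(3) one_less_power[of b 3] by linarith
  have "c ^ m dvd b ^ 3 - 1"
    unfolding m_def using assms(1) \<open>odd c\<close> assms(6) \<open>b ^ 3 \<noteq> 1\<close> assms(4,7)
    by (rule prime_power_dvd_sub_one_of_dvd_power_sub_one)
  then have "c ^ m dvd b\<^sup>2 + b + 1"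
    by (rule power_dvd_trinomial_of_pm_ord_three[OF assms(1,5)])
  then have "2 * m \<le> Z"
    using assms(2-4,9) by (intro double_exponent_le_of_power_dvd[of c b "3 * k + 1"]) simp_all
  have "c ^ (2 * m + multiplicity c (int k)) dvd power_defect (b ^ 3) k"
    using prime_power_dvd_power_defect[OF assms(1) \<open>odd c\<close> _ \<open>c ^ m dvd b ^ 3 - 1\<close>] True
    unfolding m_def by simp
  then have "c ^ (2 * m) dvd (2 * b + 1) * (c ^ Z - b * power_defect (b ^ 3) k)"
    using le_imp_power_dvd[OF \<open>2 * m \<le> Z\<close>, of c]
    by (intro dvd_mult dvd_diff) (auto elim: power_le_dvd)
  moreover have "c ^ (2 * m) dvd int k * (2 * b - 3) * (b\<^sup>2 + b + 1)\<^sup>2"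
    using dvd_power_same[OF \<open>c ^ m dvd b\<^sup>2 + b + 1\<close>, of 2] by (simp add: power_mult mult.commute)
  moreover have "c ^ z * (2 * b + 1) + 3 * int k * (b\<^sup>2 + b + 1)
      = (2 * b + 1) * (c ^ Z - b * power_defect (b ^ 3) k)
        - int k * (2 * b - 3) * (b\<^sup>2 + b + 1)\<^sup>2"
    unfolding assms(8) power_defect_def by (simp add: algebra_simps power2_eq_square power3_eq_cube)
  ultimately show ?thesis
    unfolding m_def by simp
qed simp

theorem mainTheorem11:
  fixes a b c :: int and r z Y Z :: nat
  assumes "prime c" and "r \<ge> 1" and "c = 2 ^ r * 3 + 1"
    and "a > 1" and "b > 1"
    and "coprime a b" and "coprime a c" and "coprime b c"
    and "pm_ord c b = 3"
    and "z > 0" and "Y > 0" and "Z > 0" and "z \<le> Z"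
    and "Y mod 6 = 4"
    and "a + b = c ^ z" and "a + b ^ Y = c ^ Z"
  shows "[c ^ z * (2 * b + 1) + (int Y - 1) * (b ^ 2 + b + 1) = 0]
           (mod c ^ (2 * (z - multiplicity c ((int Y - 1) div 3))))"
proof -
  have "c \<ge> 7"
    using \<open>r \<ge> 1\<close> \<open>c = 2 ^ r * 3 + 1\<close> power_increasing[of 1 r "2::int"] by simp
  then have "\<not> c dvd 2"
    by (auto dest: zdvd_imp_le)
  obtain k where Y: "Y = 3 * k + 1" and "odd k"
    using \<open>Y mod 6 = 4\<close> by (intro that[of "2 * (Y div 6) + 1"]) presburger+
  have cZ: "c ^ Z = c ^ z + b * ((b ^ 3) ^ k - 1)"
    using \<open>a + b = c ^ z\<close> \<open>a + b ^ Y = c ^ Z\<close> Y by (simp add: algebra_simps flip: power_mult)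
  then have "c ^ z dvd b * ((b ^ 3) ^ k - 1)"
    using le_imp_power_dvd[OF \<open>z \<le> Z\<close>, of c] by (metis add_diff_cancel_left' dvd_diff dvd_refl)
  then have "c ^ z dvd (b ^ 3) ^ k - 1"
    using \<open>coprime b c\<close> by (simp add: coprime_commute coprime_dvd_mult_right_iff)
  have "c dvd (b ^ 3) ^ k - 1"
    using \<open>z > 0\<close> by (intro dvd_trans[OF _ \<open>c ^ z dvd (b ^ 3) ^ k - 1\<close>]) simp
  moreover have "\<not> c dvd b"
    using \<open>coprime b c\<close> \<open>prime c\<close> coprime_common_divisor[of b c c] not_prime_unit by auto
  ultimately have "c dvd b ^ 3 - 1"
    using power_pm_ord_cong_one_or_minus_one[OF \<open>prime c\<close>, of b, unfolded \<open>pm_ord c b = 3\<close>]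
      \<open>odd k\<close> \<open>\<not> c dvd 2\<close> dvd_sub_one_of_dvd_odd_power_sub_one by blast
  have "b ^ Y < c ^ Z"
    using \<open>a > 1\<close> \<open>a + b ^ Y = c ^ Z\<close> by simp
  then have "c ^ (2 * (z - multiplicity c (int k)))
      dvd c ^ z * (2 * b + 1) + 3 * int k * (b\<^sup>2 + b + 1)"
    using power_dvd_combination_of_pm_ord_three[OF \<open>prime c\<close> _ \<open>b > 1\<close> _ \<open>pm_ord c b = 3\<close>
        \<open>c dvd b ^ 3 - 1\<close> \<open>c ^ z dvd (b ^ 3) ^ k - 1\<close> cZ] \<open>c \<ge> 7\<close> \<open>odd k\<close> Y
    by (simp add: odd_pos)
  then show ?thesis
    using Y by (simp add: cong_0_iff)
qed

end
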